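(* Assume the standing setting below. Let $\alpha\in(0,1/6]$ with $\alpha n$ an integer, let $P_1,P_2\subseteq X$ be disjoint with $|P_1|=|P_2|=\alpha n$, let $T\subseteq X$ be nonempty, and set $\psi:=\frac{1}{3\alpha}R_{2\alpha(k+1)\phi_\alpha}(P_2,T)$. Define $F_b:=\mathrm{far}_{k\phi_\alpha}(X\setminus P_1,T)$, let $\mathcal{B}_b$ be a $(\phi_\alpha/3)$-linear bin division of $(X\setminus P_1)\setminus F_b$ with respect to $T$; define $F_c:=\mathrm{far}_{4(k+1)\phi_\alpha}(X\setminus P_1,T)$ and let $\mathcal{B}_c$ be a $(\phi_\alpha/3)$-linear bin division of $(X\setminus P_1)\setminus F_c$ with respect to $T$. (a) If each of $F_b$ and $\mathcal{B}_b$ is trivial or well-represented in $P_2$ for $X\setminus P_1$, then $\psi\le R_{k\phi_\alpha}(X,T)$. (b) If each of $F_c$ and $\mathcal{B}_c$ is trivial or well-represented in $P_2$ for $X\setminus P_1$, then $\frac19 R_{5(k+1)\phi_\alpha}(X\setminus P_1,T)\le\psi$.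
   Context: Standing setting: $(X,\rho)$ is a finite metric space with $|X|=n$; $k\ge2$ is an integer and $\delta\in(0,1)$; $\log$ is the natural logarithm; for $\alpha>0$, $\phi_\alpha:=150\log(32k/\delta)/\alpha$. For nonempty $T\subseteq X$, $\rho(x,T):=\min_{y\in T}\rho(x,y)$ and $R(S,T):=\sum_{x\in S}\rho(x,T)$; ties are broken by a fixed ordering of $X$. For $S\subseteq X$ and real $r\ge0$, $\mathrm{far}_r(S,T)$ is the set of the $\lceil r\rceil$ points of $S$ furthest from $T$ (ties broken by the fixed ordering); if $|S|<r$, $\mathrm{far}_r(S,T):=S$ and it is called a trivial far set. $R_r(S,T):=R(S\setminus\mathrm{far}_r(S,T),T)$. For finite $W$, $A,B\subseteq W$, $B$ is well-represented in $A$ for $W$ if $|B\cap A|/|B|\in[r/2,\frac32 r]$ with $r=|A|/|W|$; a bin division is well-represented if all its bins are. A $z$-linear bin division ($z>0$) of $W$ with respect to $T$ is a partition $(\mathcal{B}(1),\ldots,\mathcal{B}(L))$ of $W$ with: (1) if $z\le|W|$, $|\mathcal{B}(i)|\ge z(i+1)/2$ for all $i$; otherwise it is trivial, $\mathcal{B}(1):=W$; (2) $|\mathcal{B}(1)|\le\frac52 z$; (3) $|\mathcal{B}(i+1)|/|\mathcal{B}(i)|\le3/2$; (4) $\rho(x,T)\ge\rho(x',T)$ whenever $x\in\mathcal{B}(i)$, $x'\in\mathcal{B}(i+1)$. *)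

theory Defs
  imports Complex_Main
begin

definition finite_metric_space :: "'a set \<Rightarrow> ('a \<Rightarrow> 'a \<Rightarrow> real) \<Rightarrow> bool" where
  "finite_metric_space X rho \<longleftrightarrow> finite X \<and>
     (\<forall>x\<in>X. \<forall>y\<in>X. rho x y \<ge> 0) \<and>
     (\<forall>x\<in>X. \<forall>y\<in>X. rho x y = 0 \<longleftrightarrow> x = y) \<and>
     (\<forall>x\<in>X. \<forall>y\<in>X. rho x y = rho y x) \<and>
     (\<forall>x\<in>X. \<forall>y\<in>X. \<forall>z\<in>X. rho x z \<le> rho x y + rho y z)"

definition phi :: "nat \<Rightarrow> real \<Rightarrow> real \<Rightarrow> real" where
  "phi k \<delta> \<alpha> = 150 * ln (32 * real k / \<delta>) / \<alpha>"

definition distT :: "('a \<Rightarrow> 'a \<Rightarrow> real) \<Rightarrow> 'a \<Rightarrow> 'a set \<Rightarrow> real" where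
  "distT rho x T = Min ((\<lambda>y. rho x y) ` T)"

definition cost :: "('a \<Rightarrow> 'a \<Rightarrow> real) \<Rightarrow> 'a set \<Rightarrow> 'a set \<Rightarrow> real" where
  "cost rho S T = (\<Sum>x\<in>S. distT rho x T)"

text \<open>Strict "furthest-first" ranking: y comes before x; ties in the distance
  to T are broken by the fixed linear order of the type (smaller first).\<close>
definition further :: "('a::linorder \<Rightarrow> 'a \<Rightarrow> real) \<Rightarrow> 'a set \<Rightarrow> 'a \<Rightarrow> 'a \<Rightarrow> bool" where
  "further rho T y x \<longleftrightarrow> distT rho y T > distT rho x T \<or>
                         (distT rho y T = distT rho x T \<and> y < x)"

text \<open>far_r(S,T): the ceil(r) points of S furthest from T, or S if |S| < r.\<close>
definition far :: "('a::linorder \<Rightarrow> 'a \<Rightarrow> real) \<Rightarrow> real \<Rightarrow> 'a set \<Rightarrow> 'a set \<Rightarrow> 'a set" where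
  "far rho r S T = (if real (card S) < r then S
      else {x\<in>S. card {y\<in>S. further rho T y x} < nat \<lceil>r\<rceil>})"

definition trivial_far :: "real \<Rightarrow> 'a set \<Rightarrow> bool" where
  "trivial_far r S \<longleftrightarrow> real (card S) < r"

definition cost_r :: "('a::linorder \<Rightarrow> 'a \<Rightarrow> real) \<Rightarrow> real \<Rightarrow> 'a set \<Rightarrow> 'a set \<Rightarrow> real" where
  "cost_r rho r S T = cost rho (S - far rho r S T) T"

definition well_represented :: "'a set \<Rightarrow> 'a set \<Rightarrow> 'a set \<Rightarrow> bool" where
  "well_represented W A B \<longleftrightarrow>
     (let r = real (card A) / real (card W);
          q = real (card (B \<inter> A)) / real (card B)
      in r / 2 \<le> q \<and> q \<le> 3 / 2 * r)"

definition well_represented_bins :: "'a set \<Rightarrow> 'a set \<Rightarrow> 'a set list \<Rightarrow> bool" where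
  "well_represented_bins W A Bs \<longleftrightarrow> (\<forall>B\<in>set Bs. well_represented W A B)"

text \<open>z-linear bin division of W with respect to T. Bin B(i) (1-indexed) is Bs!(i-1).\<close>
definition linear_bin_division ::
  "('a \<Rightarrow> 'a \<Rightarrow> real) \<Rightarrow> real \<Rightarrow> 'a set \<Rightarrow> 'a set \<Rightarrow> 'a set list \<Rightarrow> bool" where
  "linear_bin_division rho z W T Bs \<longleftrightarrow>
     Bs \<noteq> [] \<and> \<Union>(set Bs) = W \<and>
     (\<forall>i<length Bs. \<forall>j<length Bs. i \<noteq> j \<longrightarrow> Bs!i \<inter> Bs!j = {}) \<and>
     (if z \<le> real (card W)
      then (\<forall>i<length Bs. real (card (Bs!i)) \<ge> z * (real i + 2) / 2)
      else Bs = [W]) \<and>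
     real (card (Bs!0)) \<le> 5 / 2 * z \<and>
     (\<forall>i. i + 1 < length Bs \<longrightarrow> real (card (Bs!(i+1))) / real (card (Bs!i)) \<le> 3 / 2) \<and>
     (\<forall>i. i + 1 < length Bs \<longrightarrow> (\<forall>x\<in>Bs!i. \<forall>x'\<in>Bs!(i+1). distT rho x T \<ge> distT rho x' T))"

definition trivial_bin_division :: "real \<Rightarrow> 'a set \<Rightarrow> bool" where
  "trivial_bin_division z W \<longleftrightarrow> \<not> (z \<le> real (card W))"

end

theory Submission
  imports Defs
begin

(* Write W = X - P1 and r = |P2| / |W| = alpha / (1 - alpha), so alpha <= r <= 6 alpha / 5.

   (a) By well-representation, the far set F_b and the first bin B(1) together contain at most
   2 alpha (k+1) phi points of P2, so discarding the far set of P2 removes at least as much cost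
   as discarding F_b and B(1). Every later bin B(i+1) is at most 3/2 times as large as B(i) and
   lies closer to T, so its points in P2 cost at most 9r/4 times the cost of B(i). Summing over
   the bins gives psi <= 9/10 R(W - F_b), and W - F_b avoids the far set of X.

   (b) Now F_c contains at least 2 alpha (k+1) phi points of P2; being an upper part of W it
   therefore contains the far set of P2. Dually, r times the cost of B(i+1) is at most 3 times
   the cost of B(i) on P2, so alpha R(W - F_c - B(1)) <= 3 R_{2 alpha (k+1) phi}(P2). Finally
   F_c and B(1) have at most 5(k+1) phi points, which bounds R_{5(k+1) phi}(W). *)

section \<open>Far sets\<close>

lemma further_irrefl: "\<not> further rho T x x"
  by (simp add: further_def)

lemma further_trans: "further rho T x y \<Longrightarrow> further rho T y z \<Longrightarrow> further rho T x z"
  by (auto simp: further_def)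

lemma further_total: "(x::'a::linorder) \<noteq> y \<Longrightarrow> further rho T x y \<or> further rho T y x"
  by (auto simp: further_def neq_iff)

lemma further_imp_distT_le: "further rho T y x \<Longrightarrow> distT rho x T \<le> distT rho y T"
  by (auto simp: further_def)

definition far_rank :: "('a::linorder \<Rightarrow> 'a \<Rightarrow> real) \<Rightarrow> 'a set \<Rightarrow> 'a set \<Rightarrow> 'a \<Rightarrow> nat" where
  "far_rank rho T S x = card {y\<in>S. further rho T y x}"

lemma far_nontrivial:
  "\<not> real (card S) < r \<Longrightarrow> far rho r S T = {x\<in>S. far_rank rho T S x < nat \<lceil>r\<rceil>}"
  by (simp add: far_def far_rank_def)

lemma far_rank_less:
  assumes "finite S" "y \<in> S" "further rho T y x"
  shows "far_rank rho T S y < far_rank rho T S x"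
  unfolding far_rank_def
proof (rule psubset_card_mono)
  show "finite {z\<in>S. further rho T z x}" using assms by simp
  show "{z\<in>S. further rho T z y} \<subset> {z\<in>S. further rho T z x}"
    using assms further_trans[of rho T _ y x] further_irrefl[of rho T y] by blast
qed

lemma bij_betw_far_rank:
  fixes S :: "'a::linorder set"
  assumes "finite S"
  shows "bij_betw (far_rank rho T S) S {..<card S}"
proof -
  have inj: "inj_on (far_rank rho T S) S"
  proof (rule inj_onI, rule ccontr)
    fix x y assume "x \<in> S" "y \<in> S" "far_rank rho T S x = far_rank rho T S y" "x \<noteq> y"
    then show False
      using further_total[of x y rho T] far_rank_less[OF assms] by (metis less_irrefl)
  qed
  have "far_rank rho T S x < card S" if "x \<in> S" for x
    unfolding far_rank_def
    using that assms further_irrefl[of rho T x] by (intro psubset_card_mono) auto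
  then have "far_rank rho T S ` S \<subseteq> {..<card S}" by auto
  moreover have "card (far_rank rho T S ` S) = card {..<card S}"
    using card_image[OF inj] by simp
  ultimately show ?thesis
    using inj by (simp add: bij_betw_def card_subset_eq)
qed

lemma card_far:
  fixes S :: "'a::linorder set"
  assumes "finite S" "\<not> real (card S) < r"
  shows "card (far rho r S T) = nat \<lceil>r\<rceil>"
proof -
  let ?m = "nat \<lceil>r\<rceil>"
  have bij: "bij_betw (far_rank rho T S) S {..<card S}" by (rule bij_betw_far_rank[OF assms(1)])
  have m: "?m \<le> card S"
    using assms(2) by (metis ceiling_le_iff nat_le_iff not_less of_int_of_nat_eq)
  have "far_rank rho T S ` {x\<in>S. far_rank rho T S x < ?m}
      = {v \<in> far_rank rho T S ` S. v < ?m}" by auto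
  also have "\<dots> = {..<?m}" using bij order.strict_trans2[OF _ m] by (auto simp: bij_betw_def)
  finally have "far_rank rho T S ` {x\<in>S. far_rank rho T S x < ?m} = {..<?m}" .
  moreover have "inj_on (far_rank rho T S) {x\<in>S. far_rank rho T S x < ?m}"
    using bij by (auto simp: bij_betw_def intro: inj_on_subset)
  ultimately show ?thesis
    using far_nontrivial[OF assms(2)] by (metis card_image card_lessThan)
qed

lemma far_subset: "far rho r S T \<subseteq> S"
  by (auto simp: far_def)

lemma far_upward_closed:
  assumes "finite S" "x \<in> far rho r S T" "y \<in> S" "further rho T y x"
  shows "y \<in> far rho r S T"
  using assms far_rank_less[OF assms(1,3,4)] by (auto simp: far_def far_rank_def)

lemma distT_le_far:
  fixes S :: "'a::linorder set"
  assumes "finite S" "x \<in> S - far rho r S T" "y \<in> far rho r S T"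
  shows "distT rho x T \<le> distT rho y T"
  using assms far_upward_closed[OF assms(1,3), of x] further_total[of x y rho T]
    further_imp_distT_le by blast

lemma card_far_bounds:
  fixes S :: "'a::linorder set"
  assumes "finite S" "r \<le> real (card S)" "0 \<le> r"
  shows "r \<le> real (card (far rho r S T))" "real (card (far rho r S T)) \<le> r + 1"
  using card_far[OF assms(1), of r rho T] assms(2,3) by linarith+

lemma card_Diff_far_ge:
  fixes S :: "'a::linorder set"
  assumes "finite S" "r \<le> real (card S)" "0 \<le> r"
  shows "real (card S) - r - 1 \<le> real (card (S - far rho r S T))"
  using card_Diff_subset[OF finite_subset[OF far_subset assms(1)] far_subset, of rho r T]
    card_mono[OF assms(1) far_subset, of rho r T] card_far_bounds[OF assms, of rho T]
  by (simp add: of_nat_diff)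

lemma Diff_far_mono:
  fixes A B :: "'a::linorder set"
  assumes "finite B" "A \<subseteq> B"
  shows "A - far rho r A T \<subseteq> B - far rho r B T"
proof
  fix x assume x: "x \<in> A - far rho r A T"
  then have nt: "\<not> real (card A) < r" by (auto simp: far_def split: if_splits)
  moreover have "card A \<le> card B" using assms by (rule card_mono)
  moreover have "far_rank rho T A x \<le> far_rank rho T B x"
    unfolding far_rank_def using assms by (intro card_mono) auto
  ultimately show "x \<in> B - far rho r B T"
    using x assms(2) far_nontrivial[of A r rho T] far_nontrivial[of B r rho T] by auto
qed

lemma far_subset_far:
  fixes A B :: "'a::linorder set"
  assumes "finite B" "A \<subseteq> B" "r \<le> real (card (A \<inter> far rho s B T))"
  shows "far rho r A T \<subseteq> far rho s B T"
proof
  fix x assume xF: "x \<in> far rho r A T"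
  show "x \<in> far rho s B T"
  proof (rule ccontr)
    assume xn: "x \<notin> far rho s B T"
    have xA: "x \<in> A" using xF far_subset by blast
    have finA: "finite A" using assms finite_subset by blast
    have "A \<inter> far rho s B T \<subseteq> {y\<in>A. further rho T y x}"
    proof
      fix y assume y: "y \<in> A \<inter> far rho s B T"
      then have "\<not> further rho T x y"
        using far_upward_closed[OF assms(1)] xn xA assms(2) by blast
      moreover have "y \<noteq> x" using y xn by auto
      ultimately show "y \<in> {y\<in>A. further rho T y x}" using y further_total by blast
    qed
    then have le: "card (A \<inter> far rho s B T) \<le> far_rank rho T A x"
      unfolding far_rank_def using finA by (intro card_mono) auto
    have "card (A \<inter> far rho s B T) \<le> card A" using finA by (intro card_mono) auto
    then have nt: "\<not> real (card A) < r" using assms(3) by linarith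
    then have "far_rank rho T A x < nat \<lceil>r\<rceil>" using xF far_nontrivial by blast
    with le assms(3) show False by linarith
  qed
qed

section \<open>Costs and averaging\<close>

lemma cost_nonneg: "(\<And>x. x \<in> S \<Longrightarrow> 0 \<le> distT rho x T) \<Longrightarrow> 0 \<le> cost rho S T"
  unfolding cost_def by (rule sum_nonneg)

lemma cost_mono: "A \<subseteq> B \<Longrightarrow> finite B \<Longrightarrow> (\<And>x. x \<in> B \<Longrightarrow> 0 \<le> distT rho x T) \<Longrightarrow>
    cost rho A T \<le> cost rho B T"
  unfolding cost_def by (rule sum_mono2) auto

lemma cost_r_trivial: "real (card S) < r \<Longrightarrow> cost_r rho r S T = 0"
  by (simp add: cost_r_def far_def cost_def)

lemma card_mult_sum_le_if_dominated:
  fixes d :: "'a \<Rightarrow> real"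
  assumes "\<And>x y. x \<in> A \<Longrightarrow> y \<in> C \<Longrightarrow> d y \<le> d x"
  shows "real (card A) * sum d C \<le> real (card C) * sum d A"
proof -
  have "real (card A) * sum d C = (\<Sum>x\<in>A. \<Sum>y\<in>C. d y)" by simp
  also have "\<dots> \<le> (\<Sum>x\<in>A. \<Sum>y\<in>C. d x)" by (intro sum_mono) (use assms in auto)
  also have "\<dots> = real (card C) * sum d A" by (simp add: sum_distrib_left)
  finally show ?thesis .
qed

lemma sum_lower_part_le:
  fixes d :: "'a \<Rightarrow> real"
  assumes "finite A" "S \<subseteq> A" "B \<subseteq> A" "card S \<le> card B"
    and lower: "\<And>x y. x \<in> S \<Longrightarrow> y \<in> A - S \<Longrightarrow> d x \<le> d y"
    and nonneg: "\<And>x. x \<in> A \<Longrightarrow> 0 \<le> d x"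
  shows "sum d S \<le> sum d B"
proof -
  have fin: "finite S" "finite B" using assms finite_subset by auto
  have "card (S - B) \<le> card (B - S)"
    using assms(4) card_Int_Diff[OF fin(1), of B] card_Int_Diff[OF fin(2), of S]
    by (simp add: Int_commute)
  have nn: "0 \<le> sum d (B - S)" using assms(3) nonneg by (intro sum_nonneg) auto
  have "real (card (B - S)) * sum d (S - B) \<le> real (card (S - B)) * sum d (B - S)"
    by (rule card_mult_sum_le_if_dominated) (use assms(2,3) lower in auto)
  also have "\<dots> \<le> real (card (B - S)) * sum d (B - S)"
    using \<open>card (S - B) \<le> card (B - S)\<close> nn by (intro mult_right_mono) auto
  finally have "sum d (S - B) \<le> sum d (B - S)"
    using \<open>card (S - B) \<le> card (B - S)\<close> fin nn by (cases "card (B - S) = 0") auto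
  then show ?thesis
    using sum.Int_Diff[OF fin(1), of d B] sum.Int_Diff[OF fin(2), of d S]
    by (simp add: Int_commute)
qed

lemma cost_r_le_cost_Diff:
  fixes A :: "'a::linorder set"
  assumes "finite A" "real (card (A \<inter> U)) \<le> r" "\<And>x. x \<in> A \<Longrightarrow> 0 \<le> distT rho x T"
  shows "cost_r rho r A T \<le> cost rho (A - U) T"
proof (cases "real (card A) < r")
  case True
  then have "cost_r rho r A T = 0" by (rule cost_r_trivial)
  moreover have "0 \<le> cost rho (A - U) T" using assms(3) by (intro cost_nonneg) auto
  ultimately show ?thesis by simp
next
  case False
  have "card (A \<inter> U) \<le> card (far rho r A T)"
    unfolding card_far[OF assms(1) False] using assms(2) by linarith
  moreover have "card (A - far rho r A T) = card A - card (far rho r A T)"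
    by (rule card_Diff_subset[OF finite_subset[OF far_subset assms(1)] far_subset])
  moreover have "card (A - U) = card A - card (A \<inter> U)"
    using assms(1) by (intro card_Diff_subset_Int) auto
  ultimately have "card (A - far rho r A T) \<le> card (A - U)" by linarith
  with assms(1) show ?thesis
    unfolding cost_r_def cost_def
    by (intro sum_lower_part_le) (use distT_le_far[OF assms(1)] assms(3) in auto)
qed

section \<open>Well-represented bin divisions\<close>

lemma well_represented_card_Int_le:
  assumes "well_represented W A B" "0 < card B"
  shows "real (card (B \<inter> A)) \<le> 3/2 * (real (card A) / real (card W)) * real (card B)"
  using assms by (simp add: well_represented_def Let_def divide_le_eq)

lemma well_represented_card_Int_ge:
  assumes "well_represented W A B" "0 < card B"
  shows "1/2 * (real (card A) / real (card W)) * real (card B) \<le> real (card (B \<inter> A))"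
  using assms by (simp add: well_represented_def Let_def le_divide_eq)

lemma card_Int_Un_le_if_well_represented:
  assumes "well_represented W A F" "well_represented W A B" "0 < card F" "0 < card B"
  shows "real (card (A \<inter> (F \<union> B)))
    \<le> 3/2 * (real (card A) / real (card W)) * (real (card F) + real (card B))"
proof -
  have "card (A \<inter> (F \<union> B)) \<le> card (F \<inter> A) + card (B \<inter> A)"
    by (metis Int_Un_distrib Int_commute card_Un_le)
  then show ?thesis
    using well_represented_card_Int_le[OF assms(1,3)] well_represented_card_Int_le[OF assms(2,4)]
    by (simp add: distrib_left)
qed

lemma sum_Int_le_by_previous_bin:
  fixes d :: "'a \<Rightarrow> real"
  assumes dom: "\<And>x y. x \<in> B \<Longrightarrow> y \<in> B' \<Longrightarrow> d y \<le> d x" and "0 < card B"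
    and grow: "real (card B') \<le> 3/2 * real (card B)"
    and few: "real (card (B' \<inter> A)) \<le> c * real (card B')" and "0 \<le> c"
    and nonneg: "\<And>x. x \<in> B \<Longrightarrow> 0 \<le> d x"
  shows "sum d (B' \<inter> A) \<le> 3/2 * c * sum d B"
proof -
  have "0 \<le> sum d B" using nonneg by (rule sum_nonneg)
  have "real (card B) * sum d (B' \<inter> A) \<le> real (card (B' \<inter> A)) * sum d B"
    by (rule card_mult_sum_le_if_dominated) (use dom in auto)
  also have "\<dots> \<le> (3/2 * c * real (card B)) * sum d B"
    using few mult_left_mono[OF grow \<open>0 \<le> c\<close>] \<open>0 \<le> sum d B\<close>
    by (intro mult_right_mono) auto
  also have "\<dots> = real (card B) * (3/2 * c * sum d B)" by (simp add: algebra_simps)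
  finally show ?thesis using \<open>0 < card B\<close> by (meson mult_left_le_imp_le of_nat_0_less_iff)
qed

lemma sum_le_by_previous_bin_Int:
  fixes d :: "'a \<Rightarrow> real"
  assumes dom: "\<And>x y. x \<in> B \<Longrightarrow> y \<in> B' \<Longrightarrow> d y \<le> d x" and "0 < card B"
    and grow: "real (card B') \<le> 3/2 * real (card B)"
    and many: "c * real (card B) \<le> real (card (B \<inter> A))"
    and nonneg: "\<And>x. x \<in> B \<union> B' \<Longrightarrow> 0 \<le> d x"
  shows "c * sum d B' \<le> 3/2 * sum d (B \<inter> A)"
proof -
  have "0 \<le> sum d B'" "0 \<le> sum d (B \<inter> A)" using nonneg by (auto intro: sum_nonneg)
  have "real (card B) * (c * sum d B') = (c * real (card B)) * sum d B'" by simp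
  also have "\<dots> \<le> real (card (B \<inter> A)) * sum d B'"
    using many \<open>0 \<le> sum d B'\<close> by (rule mult_right_mono)
  also have "\<dots> \<le> real (card B') * sum d (B \<inter> A)"
    by (rule card_mult_sum_le_if_dominated) (use dom in auto)
  also have "\<dots> \<le> (3/2 * real (card B)) * sum d (B \<inter> A)"
    using grow \<open>0 \<le> sum d (B \<inter> A)\<close> by (rule mult_right_mono)
  also have "\<dots> = real (card B) * (3/2 * sum d (B \<inter> A))" by simp
  finally show ?thesis using \<open>0 < card B\<close> by (meson mult_left_le_imp_le of_nat_0_less_iff)
qed

lemma sum_Int_Union_list:
  fixes d :: "'a \<Rightarrow> 'b::comm_monoid_add"
  assumes "finite V" "\<Union>(set Bs) = V"
    and "\<forall>i<length Bs. \<forall>j<length Bs. i \<noteq> j \<longrightarrow> Bs!i \<inter> Bs!j = {}"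
  shows "sum d (V \<inter> A) = (\<Sum>i<length Bs. sum d (Bs!i \<inter> A))"
proof -
  have "set Bs = (\<lambda>i. Bs!i) ` {..<length Bs}" by (auto simp: set_conv_nth)
  then have "V \<inter> A = (\<Union>i<length Bs. Bs!i \<inter> A)" using assms(2) by blast
  moreover have "sum d (\<Union>i<length Bs. Bs!i \<inter> A) = (\<Sum>i<length Bs. sum d (Bs!i \<inter> A))"
  proof (rule sum.UNION_disjoint)
    show "\<forall>i\<in>{..<length Bs}. finite (Bs!i \<inter> A)"
    proof
      fix i assume "i \<in> {..<length Bs}"
      then have "Bs!i \<subseteq> V" using assms(2) by auto
      then show "finite (Bs!i \<inter> A)" using assms(1) by (simp add: finite_subset)
    qed
    show "\<forall>i\<in>{..<length Bs}. \<forall>j\<in>{..<length Bs}. i \<noteq> j \<longrightarrow> Bs!i \<inter> A \<inter> (Bs!j \<inter> A) = {}"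
      using assms(3) by blast
  qed simp
  ultimately show ?thesis by simp
qed

lemma sum_Int_Union_list_tail:
  fixes d :: "'a \<Rightarrow> 'b::cancel_comm_monoid_add"
  assumes "finite V" "\<Union>(set Bs) = V" "Bs \<noteq> []"
    and "\<forall>i<length Bs. \<forall>j<length Bs. i \<noteq> j \<longrightarrow> Bs!i \<inter> Bs!j = {}"
  shows "sum d ((V - Bs!0) \<inter> A) = (\<Sum>i<length Bs - 1. sum d (Bs!Suc i \<inter> A))"
proof -
  have "Bs!0 \<inter> A \<subseteq> V \<inter> A" using assms(2,3) by auto
  moreover have "V \<inter> A - Bs!0 \<inter> A = (V - Bs!0) \<inter> A" by blast
  ultimately have "sum d (V \<inter> A) = sum d (Bs!0 \<inter> A) + sum d ((V - Bs!0) \<inter> A)"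
    using assms(1) sum.subset_diff[of "Bs!0 \<inter> A" "V \<inter> A" d] by (simp add: add.commute)
  moreover have "(\<Sum>i<length Bs. sum d (Bs!i \<inter> A))
      = sum d (Bs!0 \<inter> A) + (\<Sum>i<length Bs - 1. sum d (Bs!Suc i \<inter> A))"
    using assms(3) sum.lessThan_Suc_shift[of "\<lambda>i. sum d (Bs!i \<inter> A)" "length Bs - 1"] by simp
  ultimately show ?thesis using sum_Int_Union_list[OF assms(1,2,4), of d A] by simp
qed

lemma linear_bin_division_nontrivialD:
  assumes "linear_bin_division rho z V T Bs" "0 < z" "z \<le> real (card V)"
  shows "Bs \<noteq> []" "\<Union>(set Bs) = V"
    and "\<forall>i<length Bs. \<forall>j<length Bs. i \<noteq> j \<longrightarrow> Bs!i \<inter> Bs!j = {}"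
    and "real (card (Bs!0)) \<le> 5/2 * z"
    and "\<And>i. i < length Bs \<Longrightarrow> 0 < card (Bs!i)"
    and "\<And>i. Suc i < length Bs \<Longrightarrow> real (card (Bs!Suc i)) \<le> 3/2 * real (card (Bs!i))"
    and "\<And>i x y. Suc i < length Bs \<Longrightarrow> x \<in> Bs!i \<Longrightarrow> y \<in> Bs!Suc i \<Longrightarrow>
           distT rho y T \<le> distT rho x T"
proof -
  have large: "\<forall>i<length Bs. z * (real i + 2) / 2 \<le> real (card (Bs!i))"
    using assms by (simp add: linear_bin_division_def)
  show pos: "0 < card (Bs!i)" if "i < length Bs" for i
  proof -
    have "0 < z * (real i + 2) / 2" using assms(2) by simp
    then show ?thesis using large that by (metis of_nat_0_less_iff order_less_le_trans)
  qed
  show "real (card (Bs!Suc i)) \<le> 3/2 * real (card (Bs!i))" if "Suc i < length Bs" for i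
    using assms(1) pos[of i] that by (auto simp: linear_bin_division_def divide_le_eq)
  show "Bs \<noteq> []" "\<Union>(set Bs) = V" "\<forall>i<length Bs. \<forall>j<length Bs. i \<noteq> j \<longrightarrow> Bs!i \<inter> Bs!j = {}"
    "real (card (Bs!0)) \<le> 5/2 * z"
    "\<And>i x y. Suc i < length Bs \<Longrightarrow> x \<in> Bs!i \<Longrightarrow> y \<in> Bs!Suc i \<Longrightarrow>
       distT rho y T \<le> distT rho x T"
    using assms(1) by (auto simp: linear_bin_division_def)
qed

lemma cost_tail_bins_Int_le:
  assumes bins: "linear_bin_division rho z V T Bs" "0 < z" "z \<le> real (card V)"
    and "finite V" and nonneg: "\<And>x. x \<in> V \<Longrightarrow> 0 \<le> distT rho x T"
    and wr: "well_represented_bins W A Bs"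
  shows "cost rho ((V - Bs!0) \<inter> A) T
    \<le> 9/4 * (real (card A) / real (card W)) * cost rho V T"
proof -
  define r where "r = real (card A) / real (card W)"
  define c where "c i = cost rho (Bs!i) T" for i
  note B = linear_bin_division_nontrivialD[OF bins]
  have "0 \<le> r" by (simp add: r_def)
  have sub: "Bs!i \<subseteq> V" if "i < length Bs" for i using B(2) nth_mem[OF that] by blast
  have "0 \<le> c i" if "i < length Bs" for i
    unfolding c_def using sub[OF that] nonneg by (intro cost_nonneg) auto
  have step: "cost rho (Bs!Suc i \<inter> A) T \<le> 9/4 * r * c i" if "Suc i < length Bs" for i
  proof -
    have "cost rho (Bs!Suc i \<inter> A) T \<le> 3/2 * (3/2 * r) * c i"
      unfolding cost_def c_def
    proof (rule sum_Int_le_by_previous_bin[OF B(7)[OF that] B(5) B(6)[OF that]])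
      have "well_represented W A (Bs!Suc i)"
        using wr that by (simp add: well_represented_bins_def)
      then show "real (card (Bs!Suc i \<inter> A)) \<le> 3/2 * r * real (card (Bs!Suc i))"
        using well_represented_card_Int_le B(5)[OF that] by (simp add: r_def)
    qed (use that sub[of i] nonneg \<open>0 \<le> r\<close> in auto)
    then show ?thesis by simp
  qed
  have "cost rho ((V - Bs!0) \<inter> A) T = (\<Sum>i<length Bs - 1. cost rho (Bs!Suc i \<inter> A) T)"
    unfolding cost_def by (rule sum_Int_Union_list_tail[OF \<open>finite V\<close> B(2,1,3)])
  also have "\<dots> \<le> (\<Sum>i<length Bs - 1. 9/4 * r * c i)"
    using step by (intro sum_mono) simp
  also have "\<dots> \<le> (\<Sum>i<length Bs. 9/4 * r * c i)"
    using \<open>0 \<le> r\<close> \<open>\<And>i. i < length Bs \<Longrightarrow> 0 \<le> c i\<close> by (intro sum_mono2) auto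
  also have "\<dots> = 9/4 * r * cost rho V T"
    using sum_Int_Union_list[OF \<open>finite V\<close> B(2,3), of "\<lambda>x. distT rho x T" UNIV]
    by (simp add: sum_distrib_left c_def cost_def)
  finally show ?thesis by (simp add: r_def)
qed

lemma cost_tail_bins_le_Int:
  assumes bins: "linear_bin_division rho z V T Bs" "0 < z" "z \<le> real (card V)"
    and "finite V" and nonneg: "\<And>x. x \<in> V \<Longrightarrow> 0 \<le> distT rho x T"
    and wr: "well_represented_bins W A Bs"
  shows "real (card A) / real (card W) * cost rho (V - Bs!0) T \<le> 3 * cost rho (V \<inter> A) T"
proof -
  define r where "r = real (card A) / real (card W)"
  define c where "c i = cost rho (Bs!i \<inter> A) T" for i
  note B = linear_bin_division_nontrivialD[OF bins]
  have sub: "Bs!i \<subseteq> V" if "i < length Bs" for i using B(2) nth_mem[OF that] by blast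
  have "0 \<le> c i" if "i < length Bs" for i
    unfolding c_def using sub[OF that] nonneg by (intro cost_nonneg) auto
  have step: "r * cost rho (Bs!Suc i) T \<le> 3 * c i" if "Suc i < length Bs" for i
  proof -
    have "r/2 * cost rho (Bs!Suc i) T \<le> 3/2 * c i"
      unfolding cost_def c_def
    proof (rule sum_le_by_previous_bin_Int[OF B(7)[OF that] B(5) B(6)[OF that]])
      show "r/2 * real (card (Bs!i)) \<le> real (card (Bs!i \<inter> A))"
        using wr that B(5) well_represented_card_Int_ge[of W A "Bs!i"]
        by (auto simp: r_def well_represented_bins_def)
    qed (use that sub[of i] sub[of "Suc i"] nonneg in auto)
    then show ?thesis by simp
  qed
  have "r * cost rho (V - Bs!0) T = (\<Sum>i<length Bs - 1. r * cost rho (Bs!Suc i) T)"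
    using sum_Int_Union_list_tail[OF \<open>finite V\<close> B(2,1,3), of "\<lambda>x. distT rho x T" UNIV]
    by (simp add: cost_def sum_distrib_left)
  also have "\<dots> \<le> (\<Sum>i<length Bs - 1. 3 * c i)"
    using step by (intro sum_mono) simp
  also have "\<dots> \<le> (\<Sum>i<length Bs. 3 * c i)"
    using \<open>\<And>i. i < length Bs \<Longrightarrow> 0 \<le> c i\<close> by (intro sum_mono2) auto
  also have "\<dots> = 3 * cost rho (V \<inter> A) T"
    using sum_Int_Union_list[OF \<open>finite V\<close> B(2,3), of "\<lambda>x. distT rho x T" A]
    by (simp add: sum_distrib_left c_def cost_def)
  finally show ?thesis by (simp add: r_def)
qed

section \<open>Two disjoint samples of equal size\<close>

locale sampled_space =
  fixes X :: "'a::linorder set" and rho :: "'a \<Rightarrow> 'a \<Rightarrow> real" and T :: "'a set"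
    and k :: nat and \<phi> \<alpha> :: real and P1 P2 :: "'a set"
  assumes finite_X: "finite X"
    and distT_nonneg: "\<And>x. x \<in> X \<Longrightarrow> 0 \<le> distT rho x T"
    and k: "2 \<le> k" and phi: "2 \<le> \<phi>" and alpha: "0 < \<alpha>" "\<alpha> \<le> 1/6"
    and samples: "P1 \<subseteq> X" "P2 \<subseteq> X" "P1 \<inter> P2 = {}"
      "real (card P1) = \<alpha> * real (card X)" "real (card P2) = \<alpha> * real (card X)"
begin

abbreviation W :: "'a set" where "W \<equiv> X - P1"

lemma card_unsampled: "real (card W) = (1 - \<alpha>) * real (card X)"
  using card_Diff_subset[OF finite_subset[OF samples(1) finite_X] samples(1)]
    card_mono[OF finite_X samples(1)] samples(4)
  by (simp add: of_nat_diff algebra_simps)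

lemma sample_ratio_bounds:
  assumes "0 < card X"
  shows "\<alpha> \<le> real (card P2) / real (card W)" "real (card P2) / real (card W) \<le> 6/5 * \<alpha>"
proof -
  have "real (card P2) / real (card W) = \<alpha> / (1 - \<alpha>)"
    using samples(5) card_unsampled alpha assms by simp
  moreover have "\<alpha> \<le> \<alpha> / (1 - \<alpha>)" "\<alpha> / (1 - \<alpha>) \<le> 6/5 * \<alpha>"
    using alpha by (simp_all add: field_simps)
  ultimately show "\<alpha> \<le> real (card P2) / real (card W)" "real (card P2) / real (card W) \<le> 6/5 * \<alpha>"
    by simp_all
qed

lemma phi_products: "4 \<le> real k * \<phi>" "0 \<le> \<phi>"
  using mult_mono[of 2 "real k" 2 \<phi>] k phi by auto

lemma large_rest_bounds:
  assumes "0 \<le> s" "s + 1 + \<phi> / 3 \<le> real (card W)"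
  shows "s \<le> real (card (far rho s W T))" "real (card (far rho s W T)) \<le> s + 1"
    and "\<phi> / 3 \<le> real (card (W - far rho s W T))"
proof -
  have "finite W" "s \<le> real (card W)" using finite_X assms(2) phi by auto
  then show "s \<le> real (card (far rho s W T))" "real (card (far rho s W T)) \<le> s + 1"
    "\<phi> / 3 \<le> real (card (W - far rho s W T))"
    using card_far_bounds card_Diff_far_ge[of W s rho T] assms by fastforce+
qed

lemma P2_unsampled: "P2 \<subseteq> W"
  using samples by blast

lemma cost_nonneg_sub: "S \<subseteq> X \<Longrightarrow> 0 \<le> cost rho S T"
  using distT_nonneg by (intro cost_nonneg) auto

lemma card_sample_Int_top_le:
  assumes "well_represented W P2 F" "well_represented W P2 B"
    and "real k * \<phi> \<le> real (card F)" "real (card F) \<le> real k * \<phi> + 1"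
    and "0 < card B" "real (card B) \<le> 5/6 * \<phi>" "0 < card X"
  shows "real (card (P2 \<inter> (F \<union> B))) \<le> 2 * \<alpha> * (real k + 1) * \<phi>"
proof -
  define r where "r = real (card P2) / real (card W)"
  have "0 < card F" using assms(3) phi_products by linarith
  have "real (card (P2 \<inter> (F \<union> B))) \<le> 3/2 * r * (real (card F) + real (card B))"
    using card_Int_Un_le_if_well_represented[OF assms(1,2) \<open>0 < card F\<close> assms(5)]
    by (simp add: r_def)
  also have "\<dots> \<le> 3/2 * (6/5 * \<alpha>) * (real k * \<phi> + 1 + 5/6 * \<phi>)"
    using sample_ratio_bounds[OF assms(7)] assms(4,6) alpha
    by (intro mult_mono) (auto simp: r_def)
  also have "\<dots> \<le> 2 * \<alpha> * (real k + 1) * \<phi>"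
  proof -
    have "9/5 \<le> real k * \<phi> / 5 + \<phi> / 2" using phi_products phi by linarith
    then have "\<alpha> * (9/5) \<le> \<alpha> * (real k * \<phi> / 5 + \<phi> / 2)"
      using alpha by (intro mult_left_mono) auto
    then show ?thesis by (simp add: algebra_simps)
  qed
  finally show ?thesis .
qed

lemma card_sample_Int_far_ge:
  assumes "well_represented W P2 F" "4 * (real k + 1) * \<phi> \<le> real (card F)"
    and "0 < card X"
  shows "2 * \<alpha> * (real k + 1) * \<phi> \<le> real (card (P2 \<inter> F))"
proof -
  define r where "r = real (card P2) / real (card W)"
  have "4 * (real k + 1) * \<phi> = 4 * (real k * \<phi>) + 4 * \<phi>" by (simp add: algebra_simps)
  then have "0 < real (card F)" using assms(2) phi_products by linarith
  then have "0 < card F" by simp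
  have "2 * \<alpha> * (real k + 1) * \<phi> = 1/2 * \<alpha> * (4 * (real k + 1) * \<phi>)" by simp
  also have "\<dots> \<le> 1/2 * r * real (card F)"
    using sample_ratio_bounds[OF assms(3)] assms(2) alpha phi_products
    by (intro mult_mono) (auto simp: r_def)
  also have "\<dots> \<le> real (card (P2 \<inter> F))"
    using well_represented_card_Int_ge[OF assms(1) \<open>0 < card F\<close>] by (simp add: r_def Int_commute)
  finally show ?thesis .
qed

lemma sample_cost_r_le_rest_cost:
  assumes bins: "linear_bin_division rho (\<phi> / 3) (W - far rho (real k * \<phi>) W T) T Bs"
    and wr_far: "trivial_far (real k * \<phi>) W \<or>
      well_represented W P2 (far rho (real k * \<phi>) W T)"
    and wr_bins: "trivial_bin_division (\<phi> / 3) (W - far rho (real k * \<phi>) W T) \<or>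
      well_represented_bins W P2 Bs"
    and large: "real k * \<phi> + 1 + \<phi> / 3 \<le> real (card W)"
  shows "cost_r rho (2 * \<alpha> * (real k + 1) * \<phi>) P2 T
    \<le> 27/10 * \<alpha> * cost rho (W - far rho (real k * \<phi>) W T) T"
proof -
  define F where "F = far rho (real k * \<phi>) W T"
  define W' where "W' = W - F"
  have "0 \<le> real k * \<phi>" "0 < \<phi> / 3" using phi phi_products by auto
  then have "0 < real (card W)" using large by linarith
  then have "0 < card X" using card_mono[OF finite_X, of W] by auto
  note bounds = large_rest_bounds[OF \<open>0 \<le> real k * \<phi>\<close> large, folded F_def, folded W'_def]
  have wrF: "well_represented W P2 F"
    using wr_far large phi by (auto simp: trivial_far_def F_def)
  have wrB: "well_represented_bins W P2 Bs"
    using wr_bins bounds(3) by (auto simp: trivial_bin_division_def W'_def F_def)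
  have bins': "linear_bin_division rho (\<phi> / 3) W' T Bs"
    using bins by (simp add: W'_def F_def)
  note B = linear_bin_division_nontrivialD[OF bins' \<open>0 < \<phi> / 3\<close> bounds(3)]
  have "well_represented W P2 (Bs!0)"
    using wrB B(1) by (simp add: well_represented_bins_def)
  then have "real (card (P2 \<inter> (F \<union> Bs!0))) \<le> 2 * \<alpha> * (real k + 1) * \<phi>"
    by (rule card_sample_Int_top_le[OF wrF _ bounds(1,2)]) (use B(1,4,5) \<open>0 < card X\<close> in auto)
  then have "cost_r rho (2 * \<alpha> * (real k + 1) * \<phi>) P2 T \<le> cost rho (P2 - (F \<union> Bs!0)) T"
    using finite_subset[OF samples(2) finite_X] samples(2) distT_nonneg
    by (intro cost_r_le_cost_Diff) auto
  also have "P2 - (F \<union> Bs!0) = (W' - Bs!0) \<inter> P2"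
    using P2_unsampled by (auto simp: W'_def)
  also have "cost rho ((W' - Bs!0) \<inter> P2) T
      \<le> 9/4 * (real (card P2) / real (card W)) * cost rho W' T"
    using cost_tail_bins_Int_le[OF bins' \<open>0 < \<phi> / 3\<close> bounds(3) _ _ wrB] finite_X distT_nonneg
    by (auto simp: W'_def)
  also have "\<dots> \<le> 9/4 * (6/5 * \<alpha>) * cost rho W' T"
    using sample_ratio_bounds(2)[OF \<open>0 < card X\<close>] cost_nonneg_sub[of W']
    by (intro mult_right_mono mult_left_mono) (auto simp: W'_def)
  finally show ?thesis by (simp add: W'_def F_def)
qed

lemma scaled_sample_cost_le:
  assumes bins: "linear_bin_division rho (\<phi> / 3) (W - far rho (real k * \<phi>) W T) T Bs"
    and wr_far: "trivial_far (real k * \<phi>) W \<or>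
      well_represented W P2 (far rho (real k * \<phi>) W T)"
    and wr_bins: "trivial_bin_division (\<phi> / 3) (W - far rho (real k * \<phi>) W T) \<or>
      well_represented_bins W P2 Bs"
  shows "1 / (3 * \<alpha>) * cost_r rho (2 * \<alpha> * (real k + 1) * \<phi>) P2 T
    \<le> cost_r rho (real k * \<phi>) X T"
proof (cases "real (card P2) < 2 * \<alpha> * (real k + 1) * \<phi>")
  case True
  moreover have "0 \<le> cost_r rho (real k * \<phi>) X T"
    unfolding cost_r_def by (rule cost_nonneg_sub) blast
  ultimately show ?thesis by (simp add: cost_r_trivial)
next
  case False
  define R where "R = cost rho (W - far rho (real k * \<phi>) W T) T"
  have "2 * ((real k + 1) * \<phi>) \<le> real (card X)"
    using False samples(5) alpha by (simp add: mult.assoc)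
  moreover have "5/6 * real (card X) \<le> real (card W)"
    unfolding card_unsampled using alpha by (intro mult_right_mono) auto
  ultimately have "real k * \<phi> + 1 + \<phi> / 3 \<le> real (card W)"
    using phi_products by (simp add: algebra_simps)
  then have "1 / (3 * \<alpha>) * cost_r rho (2 * \<alpha> * (real k + 1) * \<phi>) P2 T \<le> 9/10 * R"
    using sample_cost_r_le_rest_cost[OF bins wr_far wr_bins] alpha
    by (simp add: R_def field_simps)
  moreover have "R \<le> cost_r rho (real k * \<phi>) X T"
    unfolding R_def cost_r_def using Diff_far_mono[OF finite_X, of W] finite_X distT_nonneg
    by (intro cost_mono) auto
  moreover have "0 \<le> R" unfolding R_def by (rule cost_nonneg_sub) auto
  ultimately show ?thesis by linarith
qed

lemma tail_cost_le_sample_cost_r: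
  assumes bins: "linear_bin_division rho (\<phi> / 3) (W - far rho s W T) T Bs"
    and wr_far: "trivial_far s W \<or> well_represented W P2 (far rho s W T)"
    and wr_bins: "trivial_bin_division (\<phi> / 3) (W - far rho s W T) \<or>
      well_represented_bins W P2 Bs"
    and s: "s = 4 * (real k + 1) * \<phi>" and large: "s + 1 + \<phi> / 3 \<le> real (card W)"
  shows "\<alpha> * cost rho (W - far rho s W T - Bs!0) T
    \<le> 3 * cost_r rho (2 * \<alpha> * (real k + 1) * \<phi>) P2 T"
proof -
  define F where "F = far rho s W T"
  define W' where "W' = W - F"
  have "0 \<le> s" "0 < \<phi> / 3" using s phi by auto
  then have "0 < real (card W)" using large by linarith
  then have "0 < card X" using card_mono[OF finite_X, of W] by auto
  note bounds = large_rest_bounds[OF \<open>0 \<le> s\<close> large, folded F_def, folded W'_def]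
  have wrF: "well_represented W P2 F"
    using wr_far large phi by (auto simp: trivial_far_def F_def)
  have wrB: "well_represented_bins W P2 Bs"
    using wr_bins bounds(3) by (auto simp: trivial_bin_division_def W'_def F_def)
  have bins': "linear_bin_division rho (\<phi> / 3) W' T Bs"
    using bins by (simp add: W'_def F_def)
  have "\<alpha> * cost rho (W' - Bs!0) T
      \<le> real (card P2) / real (card W) * cost rho (W' - Bs!0) T"
    using sample_ratio_bounds(1)[OF \<open>0 < card X\<close>] cost_nonneg_sub[of "W' - Bs!0"]
    by (intro mult_right_mono) (auto simp: W'_def)
  also have "\<dots> \<le> 3 * cost rho (W' \<inter> P2) T"
    using cost_tail_bins_le_Int[OF bins' \<open>0 < \<phi> / 3\<close> bounds(3) _ _ wrB] finite_X distT_nonneg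
    by (auto simp: W'_def)
  also have "cost rho (W' \<inter> P2) T \<le> cost_r rho (2 * \<alpha> * (real k + 1) * \<phi>) P2 T"
  proof -
    have "2 * \<alpha> * (real k + 1) * \<phi> \<le> real (card (P2 \<inter> F))"
      using card_sample_Int_far_ge[OF wrF] bounds(1) s \<open>0 < card X\<close> by simp
    then have "far rho (2 * \<alpha> * (real k + 1) * \<phi>) P2 T \<subseteq> F"
      unfolding F_def using far_subset_far[OF _ P2_unsampled] finite_X by simp
    then show ?thesis
      unfolding cost_r_def using finite_subset[OF samples(2) finite_X] samples(2) distT_nonneg
      by (intro cost_mono) (auto simp: W'_def)
  qed
  finally show ?thesis by (simp add: W'_def F_def)
qed

lemma cost_r_rest_le_tail_cost:
  assumes bins: "linear_bin_division rho (\<phi> / 3) (W - far rho s W T) T Bs"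
    and s: "s = 4 * (real k + 1) * \<phi>" and large: "s + 1 + \<phi> / 3 \<le> real (card W)"
  shows "cost_r rho (5 * (real k + 1) * \<phi>) W T \<le> cost rho (W - far rho s W T - Bs!0) T"
proof -
  define F where "F = far rho s W T"
  have "0 \<le> s" "0 < \<phi> / 3" using s phi by auto
  note bounds = large_rest_bounds[OF \<open>0 \<le> s\<close> large, folded F_def]
  note B = linear_bin_division_nontrivialD[OF bins[folded F_def] \<open>0 < \<phi> / 3\<close> bounds(3)]
  have "Bs!0 \<subseteq> W - F" using B(1,2) nth_mem by blast
  then have "W \<inter> (F \<union> Bs!0) = F \<union> Bs!0" "W - (F \<union> Bs!0) = W - F - Bs!0"
    using far_subset[of rho s W T] by (auto simp: F_def)
  then have "real (card (W \<inter> (F \<union> Bs!0))) \<le> real (card F) + real (card (Bs!0))"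
    using card_Un_le[of F "Bs!0"] by simp
  also have "\<dots> \<le> 5 * (real k + 1) * \<phi>"
    using bounds(2) B(4) s phi_products by (simp add: algebra_simps)
  finally have "cost_r rho (5 * (real k + 1) * \<phi>) W T \<le> cost rho (W - (F \<union> Bs!0)) T"
    using finite_X distT_nonneg by (intro cost_r_le_cost_Diff) auto
  then show ?thesis using \<open>W - (F \<union> Bs!0) = W - F - Bs!0\<close> by (simp add: F_def)
qed

lemma scaled_sample_cost_ge:
  assumes bins: "linear_bin_division rho (\<phi> / 3)
      (W - far rho (4 * (real k + 1) * \<phi>) W T) T Bs"
    and wr_far: "trivial_far (4 * (real k + 1) * \<phi>) W \<or>
      well_represented W P2 (far rho (4 * (real k + 1) * \<phi>) W T)"
    and wr_bins: "trivial_bin_division (\<phi> / 3)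
      (W - far rho (4 * (real k + 1) * \<phi>) W T) \<or> well_represented_bins W P2 Bs"
  shows "1 / 9 * cost_r rho (5 * (real k + 1) * \<phi>) W T
    \<le> 1 / (3 * \<alpha>) * cost_r rho (2 * \<alpha> * (real k + 1) * \<phi>) P2 T"
proof (cases "real (card W) < 5 * (real k + 1) * \<phi>")
  case True
  moreover have "0 \<le> cost_r rho (2 * \<alpha> * (real k + 1) * \<phi>) P2 T"
    unfolding cost_r_def using samples(2) by (intro cost_nonneg_sub) blast
  ultimately show ?thesis using alpha by (simp add: cost_r_trivial)
next
  case False
  define s where "s = 4 * (real k + 1) * \<phi>"
  define R where "R = cost rho (W - far rho s W T - Bs!0) T"
  have "s + 1 + \<phi> / 3 \<le> real (card W)"
    using False phi_products by (simp add: s_def algebra_simps)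
  note large = s_def this
  have "1 / 9 * cost_r rho (5 * (real k + 1) * \<phi>) W T \<le> 1 / (9 * \<alpha>) * (\<alpha> * R)"
    using cost_r_rest_le_tail_cost[OF bins[folded s_def] large] alpha by (simp add: R_def)
  also have "\<dots> \<le> 1 / (9 * \<alpha>) * (3 * cost_r rho (2 * \<alpha> * (real k + 1) * \<phi>) P2 T)"
    using tail_cost_le_sample_cost_r[OF bins[folded s_def] wr_far[folded s_def]
        wr_bins[folded s_def] large] alpha
    by (intro mult_left_mono) (auto simp: R_def)
  finally show ?thesis by simp
qed

end

lemma finite_metric_space_distT_nonneg:
  assumes "finite_metric_space X rho" "T \<subseteq> X" "T \<noteq> {}" "x \<in> X"
  shows "0 \<le> distT rho x T"
proof -
  have "finite T" using assms(1,2) finite_subset by (auto simp: finite_metric_space_def)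
  then have "distT rho x T \<in> (\<lambda>y. rho x y) ` T"
    unfolding distT_def using assms(3) by (intro Min_in) auto
  then show ?thesis using assms(1,2,4) by (auto simp: finite_metric_space_def)
qed

lemma phi_ge_2:
  assumes "2 \<le> k" "0 < \<delta>" "\<delta> < 1" "0 < \<alpha>" "\<alpha> \<le> 1/6"
  shows "2 \<le> phi k \<delta> \<alpha>"
proof -
  have "64 \<le> 32 * real k / \<delta>"
    using assms(1-3) by (simp add: le_divide_eq)
  then have "exp 1 \<le> 32 * real k / \<delta>" using exp_le by linarith
  then have "1 \<le> ln (32 * real k / \<delta>)" using \<open>64 \<le> 32 * real k / \<delta>\<close> by (subst ln_ge_iff) auto
  then show ?thesis unfolding phi_def using assms(4,5) by (simp add: pos_le_divide_eq)
qed

theorem lemma8: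
  fixes X :: "'a::linorder set" and rho :: "'a \<Rightarrow> 'a \<Rightarrow> real"
    and k :: nat and \<delta> \<alpha> :: real and P1 P2 T :: "'a set"
    and Bb Bc :: "'a set list"
  assumes metric: "finite_metric_space X rho"
    and k: "k \<ge> 2" and \<delta>: "0 < \<delta>" "\<delta> < 1"
    and \<alpha>: "0 < \<alpha>" "\<alpha> \<le> 1/6" and \<alpha>n_int: "\<alpha> * real (card X) \<in> \<int>"
    and P: "P1 \<subseteq> X" "P2 \<subseteq> X" "P1 \<inter> P2 = {}"
      "real (card P1) = \<alpha> * real (card X)" "real (card P2) = \<alpha> * real (card X)"
    and T: "T \<subseteq> X" "T \<noteq> {}"
    and Bb: "linear_bin_division rho (phi k \<delta> \<alpha> / 3)
              ((X - P1) - far rho (real k * phi k \<delta> \<alpha>) (X - P1) T) T Bb"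
    and Bc: "linear_bin_division rho (phi k \<delta> \<alpha> / 3)
              ((X - P1) - far rho (4 * (real k + 1) * phi k \<delta> \<alpha>) (X - P1) T) T Bc"
  shows
   "((trivial_far (real k * phi k \<delta> \<alpha>) (X - P1) \<or>
      well_represented (X - P1) P2 (far rho (real k * phi k \<delta> \<alpha>) (X - P1) T)) \<and>
     (trivial_bin_division (phi k \<delta> \<alpha> / 3)
        ((X - P1) - far rho (real k * phi k \<delta> \<alpha>) (X - P1) T) \<or>
      well_represented_bins (X - P1) P2 Bb)
     \<longrightarrow> 1 / (3 * \<alpha>) * cost_r rho (2 * \<alpha> * (real k + 1) * phi k \<delta> \<alpha>) P2 T
         \<le> cost_r rho (real k * phi k \<delta> \<alpha>) X T)
    \<and>
    ((trivial_far (4 * (real k + 1) * phi k \<delta> \<alpha>) (X - P1) \<or>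
      well_represented (X - P1) P2 (far rho (4 * (real k + 1) * phi k \<delta> \<alpha>) (X - P1) T)) \<and>
     (trivial_bin_division (phi k \<delta> \<alpha> / 3)
        ((X - P1) - far rho (4 * (real k + 1) * phi k \<delta> \<alpha>) (X - P1) T) \<or>
      well_represented_bins (X - P1) P2 Bc)
     \<longrightarrow> 1 / 9 * cost_r rho (5 * (real k + 1) * phi k \<delta> \<alpha>) (X - P1) T
         \<le> 1 / (3 * \<alpha>) * cost_r rho (2 * \<alpha> * (real k + 1) * phi k \<delta> \<alpha>) P2 T)"
proof -
  have "finite X" using metric by (simp add: finite_metric_space_def)
  interpret sampled_space X rho T k "phi k \<delta> \<alpha>" \<alpha> P1 P2
    using \<open>finite X\<close> finite_metric_space_distT_nonneg[OF metric T] phi_ge_2[OF k \<delta> \<alpha>] k \<alpha> P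
    by unfold_locales auto
  show ?thesis
    using scaled_sample_cost_le[OF Bb] scaled_sample_cost_ge[OF Bc] by blast
qed

end
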